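(* Let $f=(f_1,f_2):\mathbb{R}^2\to\mathbb{R}^2$ be smooth, $g=f_1^2+f_2^2$, $\delta>0$ with $\delta^2$ a regular value of $g$ and $P=g^{-1}(\delta^2)\neq\emptyset$. Let $J=\partial(f_1,f_2)/\partial(x_1,x_2)$ and $F_j=\partial(f_j,J)/\partial(x_1,x_2)$, $j=1,2$. Let $T=(-\partial g/\partial x_2,\partial g/\partial x_1)$, a non-vanishing tangent vector field on $P$. For $p\in P$ let $x(t)$ be the integral curve of $T$ in $P$ with $x(0)=p$, and let $\theta$ be a smooth function near $0$ with $f(x(t))=(\delta\cos\theta(t),\delta\sin\theta(t))$. Suppose $p$ is a critical point of $f|P:P\to S^1(\delta)$. Then $$\operatorname{sign}(\theta''(0))=\operatorname{sign}\big(f_1F_1+f_2F_2\big)(p).$$ In particular, $p\in P$ is a non-degenerate critical point of $f|P$ if and only if $J(p)=0$ and $(f_1F_1+f_2F_2)(p)\neq0$.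
   Context: $S^1(\delta)$ is the circle of radius $\delta$ centered at the origin. *)

theory Defs
  imports "HOL-Analysis.Analysis"
begin

definition pd1 :: "(real \<times> real \<Rightarrow> real) \<Rightarrow> real \<times> real \<Rightarrow> real" where
  "pd1 h = (\<lambda>(a, b). deriv (\<lambda>t. h (t, b)) a)"

definition pd2 :: "(real \<times> real \<Rightarrow> real) \<Rightarrow> real \<times> real \<Rightarrow> real" where
  "pd2 h = (\<lambda>(a, b). deriv (\<lambda>t. h (a, t)) b)"

definition pd :: "bool \<Rightarrow> (real \<times> real \<Rightarrow> real) \<Rightarrow> real \<times> real \<Rightarrow> real" where
  "pd i h = (if i then pd2 h else pd1 h)"

text \<open>Smooth (C-infinity) function R^2 -> R: every iterated partial derivative
(of every order, including order 0) exists and is (Frechet) differentiable everywhere.\<close>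
definition smooth2 :: "(real \<times> real \<Rightarrow> real) \<Rightarrow> bool" where
  "smooth2 h \<longleftrightarrow> (\<forall>is :: bool list. \<forall>x. foldr pd is h differentiable (at x))"

definition smooth1_on :: "real set \<Rightarrow> (real \<Rightarrow> real) \<Rightarrow> bool" where
  "smooth1_on S h \<longleftrightarrow> (\<forall>n. \<forall>t\<in>S. (deriv ^^ n) h field_differentiable (at t))"

definition jac :: "(real \<times> real \<Rightarrow> real) \<Rightarrow> (real \<times> real \<Rightarrow> real) \<Rightarrow> real \<times> real \<Rightarrow> real" where
  "jac u v = (\<lambda>x. pd1 u x * pd2 v x - pd2 u x * pd1 v x)"

definition dir :: "(real \<times> real \<Rightarrow> real) \<Rightarrow> real \<times> real \<Rightarrow> real \<times> real \<Rightarrow> real" where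
  "dir h x v = pd1 h x * fst v + pd2 h x * snd v"

text \<open>Critical point of f|P : P -> S^1(delta), where P = g^{-1}(c) is a level set
of g at a regular value (so the tangent space of P at p is the kernel of dg(p)):
the differential of f vanishes on the tangent space of P at p.\<close>
definition crit_restr ::
  "(real \<times> real \<Rightarrow> real) \<Rightarrow> (real \<times> real \<Rightarrow> real) \<Rightarrow> (real \<times> real \<Rightarrow> real)
    \<Rightarrow> real \<Rightarrow> real \<times> real \<Rightarrow> bool" where
  "crit_restr f1 f2 g c p \<longleftrightarrow> g p = c \<and>
     (\<forall>v. dir g p v = 0 \<longrightarrow> dir f1 p v = 0 \<and> dir f2 p v = 0)"

text \<open>Non-degenerate critical point of f|P : P -> S^1(delta): a critical point
at which, in local coordinates (a regular smooth local parametrisation gamma of P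
with gamma(0) = p, and an angle coordinate theta on the circle), the second
derivative of the local representative theta is non-zero.\<close>
definition nondeg_crit_restr ::
  "(real \<times> real \<Rightarrow> real) \<Rightarrow> (real \<times> real \<Rightarrow> real) \<Rightarrow> (real \<times> real \<Rightarrow> real)
    \<Rightarrow> real \<Rightarrow> real \<times> real \<Rightarrow> bool" where
  "nondeg_crit_restr f1 f2 g \<delta> p \<longleftrightarrow> crit_restr f1 f2 g (\<delta>\<^sup>2) p \<and>
     (\<exists>\<epsilon> (\<gamma> :: real \<Rightarrow> real \<times> real) \<theta> \<gamma>'. \<epsilon> > 0 \<and> \<gamma> 0 = p \<and>
        (\<forall>t\<in>{-\<epsilon><..<\<epsilon>}. g (\<gamma> t) = \<delta>\<^sup>2) \<and>
        smooth1_on {-\<epsilon><..<\<epsilon>} (fst \<circ> \<gamma>) \<and> smooth1_on {-\<epsilon><..<\<epsilon>} (snd \<circ> \<gamma>) \<and>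
        (\<gamma> has_vector_derivative \<gamma>') (at 0) \<and> \<gamma>' \<noteq> 0 \<and>
        smooth1_on {-\<epsilon><..<\<epsilon>} \<theta> \<and>
        (\<forall>t\<in>{-\<epsilon><..<\<epsilon>}. f1 (\<gamma> t) = \<delta> * cos (\<theta> t) \<and> f2 (\<gamma> t) = \<delta> * sin (\<theta> t)) \<and>
        deriv (deriv \<theta>) 0 \<noteq> 0)"

end

theory Submission
  imports Defs
begin

text \<open>Along the integral curve x of T, the chain rule gives (f1, f2)' = 2 J (-f2, f1), so the
angle satisfies theta' = 2 J(x), and since T applied to J equals 2 (f1 F1 + f2 F2) one gets
theta''(0) = 4 (f1 F1 + f2 F2)(p). Testing criticality on T shows that the critical points of
f|P are the zeros of J on P. Any other regular smooth parametrisation gamma of P is a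
reparametrisation, gamma' = mu T(gamma), and then theta'' = 2 mu' J + 4 mu^2 (f1 F1 + f2 F2),
which at a critical point has the sign of f1 F1 + f2 F2; such a parametrisation together with a
smooth angle exists by the inverse function theorem, the angle being locally an arctan of a
quotient of smooth functions.\<close>

section \<open>Partial derivatives\<close>

lemma pd_eq_derivative:
  fixes h :: "real \<times> real \<Rightarrow> real"
  assumes D: "(h has_derivative D) (at x)"
  shows "pd1 h x = D (1, 0)" "pd2 h x = D (0, 1)"
proof -
  obtain a b where x: "x = (a, b)" by fastforce
  have lin: "linear D" using D has_derivative_linear by blast
  have "((\<lambda>t. (t, b)) has_derivative (\<lambda>s. s *\<^sub>R (1, 0))) (at a)"
    by (auto intro!: derivative_eq_intros)
  from has_derivative_compose[OF this D[unfolded x]]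
  have "((\<lambda>t. h (t, b)) has_derivative (\<lambda>s. s * D (1, 0))) (at a)"
    by (simp only: linear_scale[OF lin] real_scaleR_def)
  then show "pd1 h x = D (1, 0)"
    by (simp add: x pd1_def DERIV_imp_deriv has_field_derivative_def mult_commute_abs)
  have "((\<lambda>t. (a, t)) has_derivative (\<lambda>s. s *\<^sub>R (0, 1))) (at b)"
    by (auto intro!: derivative_eq_intros)
  from has_derivative_compose[OF this D[unfolded x]]
  have "((\<lambda>t. h (a, t)) has_derivative (\<lambda>s. s * D (0, 1))) (at b)"
    by (simp only: linear_scale[OF lin] real_scaleR_def)
  then show "pd2 h x = D (0, 1)"
    by (simp add: x pd2_def DERIV_imp_deriv has_field_derivative_def mult_commute_abs)
qed

lemma pd_eq_derivative_basis:
  "(h has_derivative D) (at x) \<Longrightarrow> pd i h x = D (if i then (0, 1) else (1, 0))"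
  using pd_eq_derivative[of h D x] by (simp add: pd_def)

lemma has_derivative_dir:
  fixes h :: "real \<times> real \<Rightarrow> real"
  assumes "h differentiable (at x)"
  shows "(h has_derivative dir h x) (at x)"
proof -
  obtain D where D: "(h has_derivative D) (at x)" using assms differentiable_def by blast
  have lin: "linear D" using D has_derivative_linear by blast
  have "D v = dir h x v" for v
  proof -
    have "D v = D (fst v *\<^sub>R (1, 0) + snd v *\<^sub>R (0, 1))" by (cases v) simp
    also have "\<dots> = fst v * D (1, 0) + snd v * D (0, 1)"
      by (simp only: linear_add[OF lin] linear_scale[OF lin] real_scaleR_def)
    finally show ?thesis by (simp add: dir_def pd_eq_derivative[OF D] mult.commute)
  qed
  then show ?thesis using D by (metis ext)
qed

lemma pd_cong_open:
  fixes h k :: "real \<times> real \<Rightarrow> real"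
  assumes "open U" "x \<in> U" "\<And>y. y \<in> U \<Longrightarrow> h y = k y"
  shows "pd i h x = pd i k x"
proof -
  obtain a b where x: "x = (a, b)" by fastforce
  have "continuous_on UNIV (\<lambda>t. (t, b))" "continuous_on UNIV (\<lambda>t. (a, t))"
    by (intro continuous_intros)+
  then have "open ((\<lambda>t. (t, b)) -` U)" "open ((\<lambda>t. (a, t)) -` U)"
    using open_vimage[OF assms(1)] by blast+
  then have "eventually (\<lambda>t. h (t, b) = k (t, b)) (nhds a)"
    "eventually (\<lambda>t. h (a, t) = k (a, t)) (nhds b)"
    using assms(2,3) unfolding x eventually_nhds by force+
  then show ?thesis
    by (cases i) (auto simp: x pd_def pd1_def pd2_def intro!: deriv_cong_ev)
qed

section \<open>Smoothness on open sets\<close>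

definition smooth2_on :: "(real \<times> real) set \<Rightarrow> (real \<times> real \<Rightarrow> real) \<Rightarrow> bool" where
  "smooth2_on U h \<longleftrightarrow> (\<forall>is. \<forall>x\<in>U. foldr pd is h differentiable (at x))"

lemma smooth2_on_UNIV: "smooth2 h \<longleftrightarrow> smooth2_on UNIV h"
  unfolding smooth2_def smooth2_on_def by blast

lemma smooth2_on_subset: "smooth2_on U h \<Longrightarrow> V \<subseteq> U \<Longrightarrow> smooth2_on V h"
  unfolding smooth2_on_def by blast

lemma smooth2_on_imp_differentiable: "smooth2_on U h \<Longrightarrow> x \<in> U \<Longrightarrow> h differentiable (at x)"
  unfolding smooth2_on_def by (metis foldr.simps(1) id_apply)

lemma smooth2_on_imp_continuous_on: "smooth2_on U h \<Longrightarrow> continuous_on U h"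
  by (intro continuous_at_imp_continuous_on ballI differentiable_imp_continuous_within
      smooth2_on_imp_differentiable)

lemma smooth2_on_pd: "smooth2_on U h \<Longrightarrow> smooth2_on U (pd i h)"
  unfolding smooth2_on_def
proof (intro allI ballI)
  fix "is" x assume "\<forall>is. \<forall>x\<in>U. foldr pd is h differentiable (at x)" "x \<in> U"
  then have "foldr pd (is @ [i]) h differentiable (at x)" by blast
  then show "foldr pd is (pd i h) differentiable (at x)" by simp
qed

lemma smooth2_on_pd1: "smooth2_on U h \<Longrightarrow> smooth2_on U (pd1 h)"
  using smooth2_on_pd[of U h False] by (simp add: pd_def)

lemma smooth2_on_pd2: "smooth2_on U h \<Longrightarrow> smooth2_on U (pd2 h)"
  using smooth2_on_pd[of U h True] by (simp add: pd_def)

lemma foldr_pd_cong_open: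
  fixes h k :: "real \<times> real \<Rightarrow> real"
  assumes "open U" "\<And>y. y \<in> U \<Longrightarrow> h y = k y" "x \<in> U"
  shows "foldr pd is h x = foldr pd is k x"
  using assms(3)
proof (induction "is" arbitrary: x)
  case Nil
  then show ?case using assms(2) by simp
next
  case (Cons i "is")
  show ?case using pd_cong_open[OF assms(1) Cons.prems Cons.IH] by simp
qed

lemma differentiable_cong_open:
  fixes h k :: "'a::real_normed_vector \<Rightarrow> 'b::real_normed_vector"
  assumes "open U" "\<And>y. y \<in> U \<Longrightarrow> h y = k y" "x \<in> U" "h differentiable (at x)"
  shows "k differentiable (at x)"
  using assms has_derivative_transform_within_open unfolding differentiable_def by blast

lemma smooth2_on_coinduct:
  fixes S :: "(real \<times> real \<Rightarrow> real) set"
  assumes "open U" "h \<in> S"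
    and diff: "\<And>h x. h \<in> S \<Longrightarrow> x \<in> U \<Longrightarrow> h differentiable (at x)"
    and pd_closed: "\<And>h i. h \<in> S \<Longrightarrow> \<exists>k\<in>S. \<forall>x\<in>U. pd i h x = k x"
  shows "smooth2_on U h"
proof -
  have "\<forall>h\<in>S. \<exists>k\<in>S. \<forall>x\<in>U. foldr pd is h x = k x" for "is"
  proof (induction "is" rule: rev_induct)
    case Nil
    then show ?case by auto
  next
    case (snoc i "is")
    show ?case
    proof
      fix h assume "h \<in> S"
      then obtain k' where k': "k' \<in> S" "\<forall>x\<in>U. pd i h x = k' x" using pd_closed by blast
      then obtain k where k: "k \<in> S" "\<forall>x\<in>U. foldr pd is k' x = k x" using snoc.IH by blast
      have "\<forall>x\<in>U. foldr pd (is @ [i]) h x = k x"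
        using foldr_pd_cong_open[of U "pd i h" k' _ "is"] assms(1) k k' by simp
      with k show "\<exists>k\<in>S. \<forall>x\<in>U. foldr pd (is @ [i]) h x = k x" by blast
    qed
  qed
  then show ?thesis
    unfolding smooth2_on_def
  proof (intro allI ballI)
    fix "is" x assume "\<And>is. \<forall>h\<in>S. \<exists>k\<in>S. \<forall>x\<in>U. foldr pd is h x = k x" "x \<in> U"
    then obtain k where "k \<in> S" "\<forall>x\<in>U. foldr pd is h x = k x" using assms(2) by blast
    moreover from this have "k differentiable (at x)" using diff \<open>x \<in> U\<close> by blast
    ultimately show "foldr pd is h differentiable (at x)"
      using differentiable_cong_open[OF assms(1), of k "foldr pd is h"] \<open>x \<in> U\<close> by simp
  qed
qed

lemma pd_const: "pd i (\<lambda>x. c) x = 0"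
  using pd_eq_derivative_basis[of "\<lambda>x. c" "\<lambda>_. 0" x i] by simp

lemma pd_add:
  assumes "h differentiable (at x)" "k differentiable (at x)"
  shows "pd i (\<lambda>x. h x + k x) x = pd i h x + pd i k x"
  using pd_eq_derivative_basis[OF has_derivative_add[OF has_derivative_dir has_derivative_dir, OF assms]]
    pd_eq_derivative_basis[OF has_derivative_dir, OF assms(1)]
    pd_eq_derivative_basis[OF has_derivative_dir, OF assms(2)]
  by simp

lemma pd_mult:
  assumes "h differentiable (at x)" "k differentiable (at x)"
  shows "pd i (\<lambda>x. h x * k x) x = h x * pd i k x + pd i h x * k x"
  using pd_eq_derivative_basis[OF has_derivative_mult[OF has_derivative_dir has_derivative_dir, OF assms]]
    pd_eq_derivative_basis[OF has_derivative_dir, OF assms(1)]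
    pd_eq_derivative_basis[OF has_derivative_dir, OF assms(2)]
  by simp

lemma pd_inverse:
  assumes "h differentiable (at x)" "h x \<noteq> 0"
  shows "pd i (\<lambda>x. inverse (h x)) x = - (inverse (h x) * pd i h x * inverse (h x))"
  using pd_eq_derivative_basis[OF Deriv.has_derivative_inverse[OF assms(2) has_derivative_dir[OF assms(1)]]]
    pd_eq_derivative_basis[OF has_derivative_dir, OF assms(1)]
  by simp

lemma pd_arctan:
  assumes "h differentiable (at x)"
  shows "pd i (\<lambda>x. arctan (h x)) x = pd i h x * inverse (1 + (h x)\<^sup>2)"
  using pd_eq_derivative_basis[OF DERIV_compose_FDERIV[OF DERIV_arctan has_derivative_dir[OF assms]]]
    pd_eq_derivative_basis[OF has_derivative_dir, OF assms]
  by simp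

text \<open>Functions built from smooth ones by field operations and arctan. Up to equality on U,
the class is closed under partial derivatives, so by coinduction all its members are smooth.\<close>

inductive smooth2_expr :: "(real \<times> real) set \<Rightarrow> (real \<times> real \<Rightarrow> real) \<Rightarrow> bool"
  for U where
  smooth: "smooth2_on U h \<Longrightarrow> smooth2_expr U h"
| const: "smooth2_expr U (\<lambda>x. c)"
| add: "smooth2_expr U h \<Longrightarrow> smooth2_expr U k \<Longrightarrow> smooth2_expr U (\<lambda>x. h x + k x)"
| mult: "smooth2_expr U h \<Longrightarrow> smooth2_expr U k \<Longrightarrow> smooth2_expr U (\<lambda>x. h x * k x)"
| inverse: "smooth2_expr U h \<Longrightarrow> \<forall>x\<in>U. h x \<noteq> 0 \<Longrightarrow> smooth2_expr U (\<lambda>x. inverse (h x))"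
| arctan: "smooth2_expr U h \<Longrightarrow> smooth2_expr U (\<lambda>x. arctan (h x))"
| cong: "smooth2_expr U h \<Longrightarrow> \<forall>x\<in>U. h x = k x \<Longrightarrow> smooth2_expr U k"

lemma smooth2_expr_imp_differentiable:
  assumes "open U" "smooth2_expr U h" "x \<in> U"
  shows "h differentiable (at x)"
  using assms(2,3)
proof (induction arbitrary: x rule: smooth2_expr.induct)
  case (inverse h)
  then show ?case
    using Deriv.has_derivative_inverse unfolding differentiable_def by blast
next
  case (arctan h)
  then show ?case
    using DERIV_compose_FDERIV[OF DERIV_arctan] unfolding differentiable_def by blast
next
  case (cong h k)
  then show ?case using differentiable_cong_open[OF assms(1), of h k] by blast
qed (use smooth2_on_imp_differentiable in auto)

lemma smooth2_expr_pd:
  assumes "open U" "smooth2_expr U h"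
  shows "\<exists>k. smooth2_expr U k \<and> (\<forall>x\<in>U. pd i h x = k x)"
  using assms(2)
proof (induction rule: smooth2_expr.induct)
  case (smooth h)
  then show ?case using smooth2_on_pd smooth2_expr.smooth by blast
next
  case (const c)
  show ?case by (auto simp: pd_const intro: smooth2_expr.const)
next
  case (add h k)
  then obtain a b where "smooth2_expr U a" "\<forall>x\<in>U. pd i h x = a x"
    "smooth2_expr U b" "\<forall>x\<in>U. pd i k x = b x" by blast
  then show ?case
    using add.hyps smooth2_expr_imp_differentiable[OF assms(1)]
    by (intro exI[of _ "\<lambda>x. a x + b x"]) (simp add: pd_add smooth2_expr.add)
next
  case (mult h k)
  then obtain a b where "smooth2_expr U a" "\<forall>x\<in>U. pd i h x = a x"
    "smooth2_expr U b" "\<forall>x\<in>U. pd i k x = b x" by blast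
  then show ?case
    using mult.hyps smooth2_expr_imp_differentiable[OF assms(1)]
    by (intro exI[of _ "\<lambda>x. h x * b x + a x * k x"])
      (simp add: pd_mult smooth2_expr.add smooth2_expr.mult)
next
  case (inverse h)
  then obtain a where a: "smooth2_expr U a" "\<forall>x\<in>U. pd i h x = a x" by blast
  have "smooth2_expr U (\<lambda>x. (- 1) * inverse (h x) * a x * inverse (h x))"
    using smooth2_expr.inverse[OF inverse.hyps] a(1) by (intro smooth2_expr.mult smooth2_expr.const)
  moreover have "\<forall>x\<in>U. pd i (\<lambda>x. inverse (h x)) x = (- 1) * inverse (h x) * a x * inverse (h x)"
    using a(2) inverse.hyps smooth2_expr_imp_differentiable[OF assms(1)] by (simp add: pd_inverse)
  ultimately show ?case by blast
next
  case (arctan h)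
  then obtain a where a: "smooth2_expr U a" "\<forall>x\<in>U. pd i h x = a x" by blast
  have "smooth2_expr U (\<lambda>x. 1 + h x * h x)"
    using arctan.hyps by (intro smooth2_expr.add smooth2_expr.mult smooth2_expr.const)
  moreover have "1 + h x * h x \<noteq> 0" for x using zero_le_square[of "h x"] by linarith
  ultimately have "smooth2_expr U (\<lambda>x. a x * inverse (1 + h x * h x))"
    using a(1) by (intro smooth2_expr.mult smooth2_expr.inverse) auto
  moreover have "\<forall>x\<in>U. pd i (\<lambda>x. arctan (h x)) x = a x * inverse (1 + h x * h x)"
    using a(2) arctan.hyps smooth2_expr_imp_differentiable[OF assms(1)]
    by (simp add: pd_arctan power2_eq_square)
  ultimately show ?case by blast
next
  case (cong h k)
  then obtain a where "smooth2_expr U a" "\<forall>x\<in>U. pd i h x = a x" by blast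
  then show ?case using pd_cong_open[OF assms(1), of _ h k i] cong.hyps(2) by auto
qed

lemma smooth2_expr_imp_smooth2_on: "open U \<Longrightarrow> smooth2_expr U h \<Longrightarrow> smooth2_on U h"
  by (rule smooth2_on_coinduct[of U h "Collect (smooth2_expr U)"])
    (use smooth2_expr_imp_differentiable smooth2_expr_pd in auto)

lemma smooth2_on_const: "open U \<Longrightarrow> smooth2_on U (\<lambda>x. c)"
  by (rule smooth2_expr_imp_smooth2_on) (auto intro: smooth2_expr.const)

lemma smooth2_on_add:
  "open U \<Longrightarrow> smooth2_on U h \<Longrightarrow> smooth2_on U k \<Longrightarrow> smooth2_on U (\<lambda>x. h x + k x)"
  by (rule smooth2_expr_imp_smooth2_on) (auto intro: smooth2_expr.add smooth2_expr.smooth)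

lemma smooth2_on_mult:
  "open U \<Longrightarrow> smooth2_on U h \<Longrightarrow> smooth2_on U k \<Longrightarrow> smooth2_on U (\<lambda>x. h x * k x)"
  by (rule smooth2_expr_imp_smooth2_on) (auto intro: smooth2_expr.mult smooth2_expr.smooth)

lemma smooth2_on_diff:
  assumes "open U" "smooth2_on U h" "smooth2_on U k"
  shows "smooth2_on U (\<lambda>x. h x - k x)"
proof -
  have "smooth2_expr U (\<lambda>x. h x + (- 1) * k x)"
    using assms(2,3) by (intro smooth2_expr.add smooth2_expr.mult smooth2_expr.const smooth2_expr.smooth)
  then show ?thesis by (rule smooth2_expr_imp_smooth2_on[OF assms(1) smooth2_expr.cong]) auto
qed

lemma smooth2_on_divide:
  assumes "open U" "smooth2_on U h" "smooth2_on U k" "\<forall>x\<in>U. k x \<noteq> 0"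
  shows "smooth2_on U (\<lambda>x. h x / k x)"
proof -
  have "smooth2_expr U (\<lambda>x. h x * inverse (k x))"
    using assms(2-4) by (intro smooth2_expr.mult smooth2_expr.inverse smooth2_expr.smooth)
  then show ?thesis
    by (rule smooth2_expr_imp_smooth2_on[OF assms(1) smooth2_expr.cong]) (auto simp: divide_inverse)
qed

lemma smooth2_on_arctan: "open U \<Longrightarrow> smooth2_on U h \<Longrightarrow> smooth2_on U (\<lambda>x. arctan (h x))"
  by (rule smooth2_expr_imp_smooth2_on) (auto intro: smooth2_expr.arctan smooth2_expr.smooth)

lemma smooth2_on_affine: "smooth2_on U (\<lambda>x. a * fst x + b * snd x + c)"
proof -
  define S where "S = {h. \<exists>a b c. h = (\<lambda>x::real \<times> real. a * fst x + b * snd x + c)}"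
  have "smooth2_on UNIV (\<lambda>x. a * fst x + b * snd x + c)"
  proof (rule smooth2_on_coinduct[of UNIV _ S])
    fix h :: "real \<times> real \<Rightarrow> real" and x i
    assume "h \<in> S"
    then obtain a b c where h: "h = (\<lambda>x. a * fst x + b * snd x + c)" unfolding S_def by blast
    have D: "(h has_derivative (\<lambda>v. a * fst v + b * snd v)) (at y)" for y
      unfolding h by (auto intro!: derivative_eq_intros)
    then show "h differentiable (at x)" unfolding differentiable_def by blast
    have "pd i h y = 0 * fst y + 0 * snd y + (if i then b else a)" for y
      using pd_eq_derivative_basis[OF D] by simp
    moreover have "(\<lambda>x. 0 * fst x + 0 * snd x + (if i then b else a)) \<in> S"
      unfolding S_def by blast
    ultimately show "\<exists>k\<in>S. \<forall>x\<in>UNIV. pd i h x = k x" by (intro bexI) auto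
  qed (auto simp: S_def)
  then show ?thesis by (rule smooth2_on_subset) simp
qed

lemma smooth2_on_fst: "smooth2_on U fst"
  using smooth2_on_affine[of U 1 0 0] by simp

lemma smooth2_on_snd: "smooth2_on U snd"
  using smooth2_on_affine[of U 0 1 0] by simp

section \<open>Smooth functions along curves\<close>

lemma smooth1_on_imp_field_differentiable:
  "smooth1_on I h \<Longrightarrow> t \<in> I \<Longrightarrow> h field_differentiable (at t)"
  unfolding smooth1_on_def by (metis funpow_0)

lemma smooth1_on_deriv: "smooth1_on I h \<Longrightarrow> smooth1_on I (deriv h)"
  unfolding smooth1_on_def by (metis funpow_Suc_right o_apply)

lemma has_real_derivative_comp_curve:
  fixes K :: "real \<times> real \<Rightarrow> real" and \<gamma> :: "real \<Rightarrow> real \<times> real"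
  assumes "K differentiable (at (\<gamma> t))" "(\<gamma> has_vector_derivative w) (at t)"
  shows "((\<lambda>s. K (\<gamma> s)) has_real_derivative dir K (\<gamma> t) w) (at t)"
proof -
  have "(\<gamma> has_derivative (\<lambda>s. s *\<^sub>R w)) (at t)"
    using assms(2) by (simp add: has_vector_derivative_def)
  from has_derivative_compose[OF this has_derivative_dir[OF assms(1)]]
  have "((\<lambda>s. K (\<gamma> s)) has_derivative (\<lambda>s. s * dir K (\<gamma> t) w)) (at t)"
    by (simp add: dir_def algebra_simps)
  then show ?thesis by (simp add: has_field_derivative_def mult_commute_abs)
qed

lemma smooth1_on_comp_integral_curve:
  fixes \<gamma> :: "real \<Rightarrow> real \<times> real"
  assumes U: "open U" and I: "open I"
    and \<gamma>: "\<And>t. t \<in> I \<Longrightarrow> \<gamma> t \<in> U \<and> (\<gamma> has_vector_derivative (W1 (\<gamma> t), W2 (\<gamma> t))) (at t)"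
    and W: "smooth2_on U W1" "smooth2_on U W2" and H: "smooth2_on U H"
  shows "smooth1_on I (H \<circ> \<gamma>)"
proof -
  have deriv_comp: "((\<lambda>s. K (\<gamma> s)) has_real_derivative dir K (\<gamma> t) (W1 (\<gamma> t), W2 (\<gamma> t))) (at t)"
    if "smooth2_on U K" "t \<in> I" for K t
    using has_real_derivative_comp_curve \<gamma>[OF \<open>t \<in> I\<close>] smooth2_on_imp_differentiable[OF \<open>smooth2_on U K\<close>]
    by blast
  have "\<exists>K. smooth2_on U K \<and> (\<forall>t\<in>I. (deriv ^^ n) (H \<circ> \<gamma>) t = K (\<gamma> t))" for n
  proof (induction n)
    case 0
    show ?case using H by auto
  next
    case (Suc n)
    then obtain K where K: "smooth2_on U K" "\<forall>t\<in>I. (deriv ^^ n) (H \<circ> \<gamma>) t = K (\<gamma> t)" by blast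
    define K' where "K' = (\<lambda>x. dir K x (W1 x, W2 x))"
    have "smooth2_on U K'"
      unfolding K'_def dir_def fst_conv snd_conv
      by (intro smooth2_on_add smooth2_on_mult smooth2_on_pd1 smooth2_on_pd2 K(1) W U)
    moreover have "(deriv ^^ Suc n) (H \<circ> \<gamma>) t = K' (\<gamma> t)" if t: "t \<in> I" for t
    proof -
      have "eventually (\<lambda>s. (deriv ^^ n) (H \<circ> \<gamma>) s = K (\<gamma> s)) (nhds t)"
        using K(2) I t eventually_nhds by blast
      then have "(deriv ^^ Suc n) (H \<circ> \<gamma>) t = deriv (\<lambda>s. K (\<gamma> s)) t"
        using deriv_cong_ev by force
      also have "\<dots> = K' (\<gamma> t)"
        using DERIV_imp_deriv[OF deriv_comp[OF K(1) t]] by (simp add: K'_def)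
      finally show ?thesis .
    qed
    ultimately show ?case by blast
  qed
  then show ?thesis
    unfolding smooth1_on_def
  proof (intro allI ballI)
    fix n t assume "t \<in> I" and "\<And>n. \<exists>K. smooth2_on U K \<and> (\<forall>t\<in>I. (deriv ^^ n) (H \<circ> \<gamma>) t = K (\<gamma> t))"
    then obtain K where K: "smooth2_on U K" "\<forall>t\<in>I. (deriv ^^ n) (H \<circ> \<gamma>) t = K (\<gamma> t)" by blast
    from deriv_comp[OF K(1) \<open>t \<in> I\<close>]
    have "((deriv ^^ n) (H \<circ> \<gamma>) has_real_derivative dir K (\<gamma> t) (W1 (\<gamma> t), W2 (\<gamma> t))) (at t)"
      by (rule has_field_derivative_transform_within_open[OF _ I \<open>t \<in> I\<close>]) (use K in auto)
    then show "(deriv ^^ n) (H \<circ> \<gamma>) field_differentiable (at t)"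
      unfolding field_differentiable_def by blast
  qed
qed

section \<open>Curves in regular level sets\<close>

lemma orthogonal_eq_scaled_rotation:
  fixes g1 g2 v1 v2 :: real
  assumes "g1 * v1 + g2 * v2 = 0" "(g1, g2) \<noteq> (0, 0)"
  shows "(v1, v2) = ((g1 * v2 - g2 * v1) / (g1\<^sup>2 + g2\<^sup>2)) *\<^sub>R (- g2, g1)"
proof -
  have N: "g1\<^sup>2 + g2\<^sup>2 \<noteq> 0" using assms(2) by (simp add: sum_power2_eq_zero_iff)
  have "v1 * (g1\<^sup>2 + g2\<^sup>2) = - g2 * (g1 * v2 - g2 * v1)"
    "v2 * (g1\<^sup>2 + g2\<^sup>2) = g1 * (g1 * v2 - g2 * v1)"
    using assms(1) by algebra+
  with N show ?thesis by (simp add: field_simps)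
qed

lemma level_curve_velocity:
  fixes g :: "real \<times> real \<Rightarrow> real" and \<gamma> :: "real \<Rightarrow> real \<times> real"
  assumes I: "open I" and g: "smooth2_on UNIV g"
    and level: "\<And>t. t \<in> I \<Longrightarrow> g (\<gamma> t) = c"
    and reg: "\<And>t. t \<in> I \<Longrightarrow> (pd1 g (\<gamma> t), pd2 g (\<gamma> t)) \<noteq> (0, 0)"
    and s1: "smooth1_on I (fst \<circ> \<gamma>)" and s2: "smooth1_on I (snd \<circ> \<gamma>)"
  obtains \<mu> where
    "\<And>t. t \<in> I \<Longrightarrow> (\<gamma> has_vector_derivative \<mu> t *\<^sub>R (- pd2 g (\<gamma> t), pd1 g (\<gamma> t))) (at t)"
    "\<And>t. t \<in> I \<Longrightarrow> \<mu> field_differentiable (at t)"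
proof -
  define d1 where "d1 = deriv (fst \<circ> \<gamma>)"
  define d2 where "d2 = deriv (snd \<circ> \<gamma>)"
  define \<mu> where "\<mu> t = (pd1 g (\<gamma> t) * d2 t - pd2 g (\<gamma> t) * d1 t) / ((pd1 g (\<gamma> t))\<^sup>2 + (pd2 g (\<gamma> t))\<^sup>2)"
    for t
  have velocity: "(\<gamma> has_vector_derivative (d1 t, d2 t)) (at t)" if "t \<in> I" for t
  proof -
    have "((fst \<circ> \<gamma>) has_vector_derivative d1 t) (at t)" "((snd \<circ> \<gamma>) has_vector_derivative d2 t) (at t)"
      using smooth1_on_imp_field_differentiable[OF s1 that] smooth1_on_imp_field_differentiable[OF s2 that]
      unfolding d1_def d2_def
      by (simp_all add: DERIV_deriv_iff_field_differentiable
          has_real_derivative_iff_has_vector_derivative[symmetric])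
    from has_vector_derivative_Pair[OF this] show ?thesis by (simp add: o_def)
  qed
  have tangent: "dir g (\<gamma> t) (d1 t, d2 t) = 0" if t: "t \<in> I" for t
  proof -
    have "((\<lambda>s. g (\<gamma> s)) has_real_derivative 0) (at t)"
      by (rule has_field_derivative_transform_within_open[OF _ I t, of "\<lambda>_. c"]) (use level in auto)
    then show ?thesis
      using DERIV_unique has_real_derivative_comp_curve[OF smooth2_on_imp_differentiable[OF g] velocity[OF t]]
      by blast
  qed
  have "(\<gamma> has_vector_derivative \<mu> t *\<^sub>R (- pd2 g (\<gamma> t), pd1 g (\<gamma> t))) (at t)"
    if t: "t \<in> I" for t
  proof -
    have "pd1 g (\<gamma> t) * d1 t + pd2 g (\<gamma> t) * d2 t = 0"
      using tangent[OF t] by (simp add: dir_def)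
    from orthogonal_eq_scaled_rotation[OF this reg[OF t]]
    have "(d1 t, d2 t) = \<mu> t *\<^sub>R (- pd2 g (\<gamma> t), pd1 g (\<gamma> t))" unfolding \<mu>_def .
    then show ?thesis using velocity[OF t] by simp
  qed
  moreover have "\<mu> field_differentiable (at t)" if t: "t \<in> I" for t
  proof -
    have "(\<lambda>s. pd1 g (\<gamma> s)) field_differentiable (at t)" "(\<lambda>s. pd2 g (\<gamma> s)) field_differentiable (at t)"
      using has_real_derivative_comp_curve[OF _ velocity[OF t]] g
        smooth2_on_imp_differentiable[OF smooth2_on_pd1] smooth2_on_imp_differentiable[OF smooth2_on_pd2]
      unfolding field_differentiable_def by blast+
    moreover have "d1 field_differentiable (at t)" "d2 field_differentiable (at t)"
      using smooth1_on_imp_field_differentiable[OF smooth1_on_deriv t] s1 s2 unfolding d1_def d2_def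
      by blast+
    moreover have "(pd1 g (\<gamma> t))\<^sup>2 + (pd2 g (\<gamma> t))\<^sup>2 \<noteq> 0"
      using reg[OF t] by (simp add: sum_power2_eq_zero_iff)
    ultimately show ?thesis
      unfolding \<mu>_def
      by (intro field_differentiable_divide field_differentiable_diff field_differentiable_add
          field_differentiable_mult field_differentiable_power) auto
  qed
  ultimately show ?thesis using that by blast
qed

section \<open>Local inverses in the plane\<close>

definition mat2 :: "real \<Rightarrow> real \<Rightarrow> real \<Rightarrow> real \<Rightarrow> (real \<times> real) \<Rightarrow>\<^sub>L (real \<times> real)" where
  "mat2 a b c d = Blinfun (\<lambda>v. (a * fst v + b * snd v, c * fst v + d * snd v))"

lemma mat2_apply: "blinfun_apply (mat2 a b c d) v = (a * fst v + b * snd v, c * fst v + d * snd v)"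
proof -
  have "bounded_linear (\<lambda>v :: real \<times> real. (a * fst v + b * snd v, c * fst v + d * snd v))"
    by (intro bounded_linear_Pair bounded_linear_add bounded_linear_const_mult
        bounded_linear_fst bounded_linear_snd)
  then show ?thesis unfolding mat2_def by (simp add: bounded_linear_Blinfun_apply)
qed

lemma mat2_inverse_first_column:
  assumes "a * d - b * c \<noteq> 0"
  shows "blinfun_apply (mat2 a b c d) (d / (a * d - b * c), - c / (a * d - b * c)) = (1, 0)"
proof -
  define D where "D = a * d - b * c"
  have "a * (d / D) + b * (- c / D) = 1" "c * (d / D) + d * (- c / D) = 0"
    using assms by (simp_all add: D_def[symmetric] field_simps)
  then show ?thesis by (simp add: mat2_apply D_def)
qed

lemma mat2_inverse:
  assumes "a * d - b * c \<noteq> 0"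
  shows "mat2 (d / (a * d - b * c)) (- b / (a * d - b * c)) (- c / (a * d - b * c)) (a / (a * d - b * c))
      o\<^sub>L mat2 a b c d = id_blinfun"
proof (rule blinfun_eqI)
  fix v :: "real \<times> real"
  define D where "D = a * d - b * c"
  have "d / D * (a * fst v + b * snd v) + - b / D * (c * fst v + d * snd v) = fst v"
    "- c / D * (a * fst v + b * snd v) + a / D * (c * fst v + d * snd v) = snd v"
    using assms by (simp_all add: D_def[symmetric] field_simps) (simp_all add: D_def algebra_simps)
  then show "blinfun_apply (mat2 (d / (a * d - b * c)) (- b / (a * d - b * c))
      (- c / (a * d - b * c)) (a / (a * d - b * c)) o\<^sub>L mat2 a b c d) v = blinfun_apply id_blinfun v"
    by (simp add: mat2_apply D_def)
qed

lemma has_vector_derivative_inverse_on_line: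
  fixes \<Psi> :: "'a::real_normed_vector \<Rightarrow> 'b::real_normed_vector"
  assumes "(\<Psi> has_derivative inv L) (at (y + t *\<^sub>R e))" "inj L" "L w = e"
  shows "((\<lambda>s. \<Psi> (y + s *\<^sub>R e)) has_vector_derivative w) (at t)"
proof -
  have lin: "linear (inv L)" using has_derivative_linear[OF assms(1)] .
  have "((\<lambda>s. y + s *\<^sub>R e) has_derivative (\<lambda>s. s *\<^sub>R e)) (at t)"
    by (auto intro!: derivative_eq_intros)
  from has_derivative_compose[OF this assms(1)]
  have "((\<lambda>s. \<Psi> (y + s *\<^sub>R e)) has_derivative (\<lambda>s. s *\<^sub>R inv L e)) (at t)"
    by (simp only: linear_scale[OF lin])
  then show ?thesis
    using inv_f_f[OF assms(2), of w] assms(3) by (simp add: has_vector_derivative_def)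
qed

lemma local_inverse_level_chart:
  fixes g :: "real \<times> real \<Rightarrow> real"
  assumes \<Phi>_def: "\<Phi> = (\<lambda>x. (a * fst x + b * snd x, g x))"
    and g: "smooth2_on UNIV g" and V: "open V" "p \<in> V"
    and det: "a * pd2 g p - b * pd1 g p \<noteq> 0"
  obtains V' Y \<Psi> where "open V'" "V' \<subseteq> V" "p \<in> V'" "open Y" "\<Phi> p \<in> Y"
    "homeomorphism V' Y \<Phi> \<Psi>"
    "\<And>y. y \<in> Y \<Longrightarrow> (\<Psi> has_derivative inv (blinfun_apply (mat2 a b (pd1 g (\<Psi> y)) (pd2 g (\<Psi> y))))) (at y)"
    "\<And>y. y \<in> Y \<Longrightarrow> inj (blinfun_apply (mat2 a b (pd1 g (\<Psi> y)) (pd2 g (\<Psi> y))))"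
proof -
  define \<Phi>' where "\<Phi>' x = mat2 a b (pd1 g x) (pd2 g x)" for x
  have deriv: "(\<Phi> has_derivative blinfun_apply (\<Phi>' x)) (at x)" for x
    unfolding \<Phi>_def \<Phi>'_def mat2_apply[abs_def]
    using has_derivative_dir[OF smooth2_on_imp_differentiable[OF g, of x]]
    unfolding dir_def by (auto intro!: derivative_eq_intros)
  have cont: "continuous_on V \<Phi>'"
    by (rule continuous_on_blinfun_componentwise)
      (auto simp: \<Phi>'_def mat2_apply intro!: continuous_intros
        smooth2_on_imp_continuous_on[OF smooth2_on_subset[OF smooth2_on_pd1[OF g]]]
        smooth2_on_imp_continuous_on[OF smooth2_on_subset[OF smooth2_on_pd2[OF g]]])
  have inverse: "mat2 (pd2 g p / (a * pd2 g p - b * pd1 g p)) (- b / (a * pd2 g p - b * pd1 g p))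
      (- pd1 g p / (a * pd2 g p - b * pd1 g p)) (a / (a * pd2 g p - b * pd1 g p)) o\<^sub>L \<Phi>' p
      = id_blinfun"
    using mat2_inverse det unfolding \<Phi>'_def by blast
  obtain V' Y \<Psi> \<Psi>' where ift: "open V'" "V' \<subseteq> V" "p \<in> V'" "open Y" "\<Phi> p \<in> Y"
    "homeomorphism V' Y \<Phi> \<Psi>"
    "\<And>y. y \<in> Y \<Longrightarrow> (\<Psi> has_derivative \<Psi>' y) (at y)"
    "\<And>y. y \<in> Y \<Longrightarrow> \<Psi>' y = inv (blinfun_apply (\<Phi>' (\<Psi> y)))"
    "\<And>y. y \<in> Y \<Longrightarrow> bij (blinfun_apply (\<Phi>' (\<Psi> y)))"
    using inverse_function_theorem[OF V(1) deriv cont V(2) inverse] by blast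
  show ?thesis
  proof (rule that[OF ift(1-6)])
    fix y assume y: "y \<in> Y"
    show "(\<Psi> has_derivative inv (blinfun_apply (mat2 a b (pd1 g (\<Psi> y)) (pd2 g (\<Psi> y))))) (at y)"
      using ift(7,8)[OF y] unfolding \<Phi>'_def by simp
    show "inj (blinfun_apply (mat2 a b (pd1 g (\<Psi> y)) (pd2 g (\<Psi> y))))"
      using bij_is_inj[OF ift(9)[OF y]] unfolding \<Phi>'_def .
  qed
qed

text \<open>The curve is the preimage of a horizontal segment under the local inverse of
x \<mapsto> (a * fst x + b * snd x, g x), where (a, b) is the rotated gradient of g at p; its velocity
is the preimage of (1, 0) under the differential of that map.\<close>

lemma regular_level_integral_curve:
  fixes g :: "real \<times> real \<Rightarrow> real"
  assumes g: "smooth2_on UNIV g" and U: "open U" "p \<in> U"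
    and reg: "(pd1 g p, pd2 g p) \<noteq> (0, 0)"
  obtains \<epsilon> V \<gamma> W1 W2 where "\<epsilon> > 0" "open V" "V \<subseteq> U" "\<gamma> 0 = p"
    "smooth2_on V W1" "smooth2_on V W2" "(W1 p, W2 p) \<noteq> (0, 0)"
    "\<And>t. t \<in> {-\<epsilon><..<\<epsilon>} \<Longrightarrow>
       \<gamma> t \<in> V \<and> g (\<gamma> t) = g p \<and> (\<gamma> has_vector_derivative (W1 (\<gamma> t), W2 (\<gamma> t))) (at t)"
proof -
  define a where "a = - pd2 g p"
  define b where "b = pd1 g p"
  define \<Phi> where "\<Phi> = (\<lambda>x. (a * fst x + b * snd x, g x))"
  define det where "det x = a * pd2 g x - b * pd1 g x" for x
  define V where "V = U \<inter> {x. det x \<noteq> 0}"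
  define W1 where "W1 x = pd2 g x / det x" for x
  define W2 where "W2 x = - pd1 g x / det x" for x
  have smooth_det: "smooth2_on UNIV det"
    unfolding det_def
    by (intro smooth2_on_diff smooth2_on_mult smooth2_on_const smooth2_on_pd1 smooth2_on_pd2 g) simp_all
  have "det p = - ((pd1 g p)\<^sup>2 + (pd2 g p)\<^sup>2)"
    by (simp add: det_def a_def b_def power2_eq_square)
  moreover have "(pd1 g p)\<^sup>2 + (pd2 g p)\<^sup>2 \<noteq> 0"
    using reg by (simp add: sum_power2_eq_zero_iff)
  ultimately have det_p: "det p \<noteq> 0" by linarith
  have V: "open V" "p \<in> V" "V \<subseteq> U"
    using U det_p smooth2_on_imp_continuous_on[OF smooth_det]
    by (auto simp: V_def intro!: open_Int open_Collect_neq continuous_on_const)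
  have W: "smooth2_on V W1" "smooth2_on V W2"
    unfolding W1_def W2_def using smooth2_on_subset[OF smooth_det] V(1)
    by (auto simp: V_def intro!: smooth2_on_divide smooth2_on_subset[OF smooth2_on_pd1[OF g]]
        smooth2_on_subset[OF smooth2_on_pd2[OF g]] smooth2_on_diff[of V "\<lambda>_. 0", simplified]
        smooth2_on_const)
  from det_p have "a * pd2 g p - b * pd1 g p \<noteq> 0" by (simp add: det_def)
  from local_inverse_level_chart[OF \<Phi>_def g V(1,2) this]
  obtain V' Y \<Psi> where chart: "open V'" "V' \<subseteq> V" "p \<in> V'" "open Y" "\<Phi> p \<in> Y"
    "homeomorphism V' Y \<Phi> \<Psi>"
    "\<And>y. y \<in> Y \<Longrightarrow> (\<Psi> has_derivative inv (blinfun_apply (mat2 a b (pd1 g (\<Psi> y)) (pd2 g (\<Psi> y))))) (at y)"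
    "\<And>y. y \<in> Y \<Longrightarrow> inj (blinfun_apply (mat2 a b (pd1 g (\<Psi> y)) (pd2 g (\<Psi> y))))"
    by blast
  obtain \<epsilon> where \<epsilon>: "\<epsilon> > 0" "ball (\<Phi> p) \<epsilon> \<subseteq> Y" using chart(4,5) openE by blast
  define \<gamma> where "\<gamma> t = \<Psi> (\<Phi> p + t *\<^sub>R (1, 0))" for t
  have segment: "\<Phi> p + t *\<^sub>R (1, 0) \<in> Y" if "t \<in> {-\<epsilon><..<\<epsilon>}" for t
    using that \<epsilon>(2) by (auto simp: dist_Pair_Pair dist_norm)
  have \<gamma>_V: "\<gamma> t \<in> V" and \<Phi>_\<gamma>: "\<Phi> (\<gamma> t) = \<Phi> p + t *\<^sub>R (1, 0)" if "t \<in> {-\<epsilon><..<\<epsilon>}" for t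
    using homeomorphism_image2[OF chart(6)] homeomorphism_apply2[OF chart(6)] segment[OF that] chart(2)
    unfolding \<gamma>_def by blast+
  have "(\<gamma> has_vector_derivative (W1 (\<gamma> t), W2 (\<gamma> t))) (at t)" if t: "t \<in> {-\<epsilon><..<\<epsilon>}" for t
  proof -
    have "((\<lambda>s. \<Psi> (\<Phi> p + s *\<^sub>R (1, 0))) has_vector_derivative (W1 (\<gamma> t), W2 (\<gamma> t))) (at t)"
    proof (rule has_vector_derivative_inverse_on_line)
      show "blinfun_apply (mat2 a b (pd1 g (\<gamma> t)) (pd2 g (\<gamma> t))) (W1 (\<gamma> t), W2 (\<gamma> t)) = (1, 0)"
        using mat2_inverse_first_column \<gamma>_V[OF t] by (simp add: W1_def W2_def det_def V_def)
    qed (use chart(7,8)[OF segment[OF t]] in \<open>simp_all add: \<gamma>_def\<close>)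
    then show ?thesis by (simp only: \<gamma>_def[abs_def])
  qed
  moreover have "\<gamma> 0 = p"
    using homeomorphism_apply1[OF chart(6,3)] by (simp add: \<gamma>_def zero_prod_def[symmetric])
  moreover have "(W1 p, W2 p) \<noteq> (0, 0)"
    using reg det_p by (auto simp: W1_def W2_def)
  moreover have "g (\<gamma> t) = g p" if "t \<in> {-\<epsilon><..<\<epsilon>}" for t
    using \<Phi>_\<gamma>[OF that] by (simp add: \<Phi>_def)
  ultimately show ?thesis
    using that[OF \<epsilon>(1) V(1) V(3) _ W] \<gamma>_V by blast
qed

section \<open>The angle function of a map to the plane\<close>

lemma dir_scaleR: "dir h x (c *\<^sub>R v) = c * dir h x v"
  by (simp add: dir_def algebra_simps)

lemma sin_cos_mult_cancel:
  fixes a b x :: real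
  assumes "sin x * a = sin x * b" "cos x * a = cos x * b"
  shows "a = b"
proof -
  have "a = sin x * (sin x * a) + cos x * (cos x * a)"
    by (simp add: distrib_right[symmetric] mult.assoc[symmetric] power2_eq_square[symmetric])
  also have "\<dots> = sin x * (sin x * b) + cos x * (cos x * b)" by (simp only: assms)
  also have "\<dots> = b"
    by (simp add: distrib_right[symmetric] mult.assoc[symmetric] power2_eq_square[symmetric])
  finally show ?thesis .
qed

lemma collinear_orthogonal_combination:
  fixes a b c d s t v w :: real
  assumes "a * d - b * c = 0" and "(s * a + t * c) * v + (s * b + t * d) * w = 0"
    and "(s * a + t * c, s * b + t * d) \<noteq> (0, 0)"
  shows "a * v + b * w = 0 \<and> c * v + d * w = 0"
proof -
  have "(a * v + b * w) * (s * a + t * c) = 0" "(a * v + b * w) * (s * b + t * d) = 0"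
    "(c * v + d * w) * (s * a + t * c) = 0" "(c * v + d * w) * (s * b + t * d) = 0"
    using assms(1,2) by algebra+
  with assms(3) show ?thesis by auto
qed

lemma polar_angle_arctan:
  fixes \<delta> y1 y2 \<theta>0 :: real
  defines "u \<equiv> cos \<theta>0 * y1 + sin \<theta>0 * y2" and "w \<equiv> - sin \<theta>0 * y1 + cos \<theta>0 * y2"
  assumes \<delta>: "\<delta> > 0" and norm: "y1\<^sup>2 + y2\<^sup>2 = \<delta>\<^sup>2" and u: "u > 0"
  shows "y1 = \<delta> * cos (\<theta>0 + arctan (w / u)) \<and> y2 = \<delta> * sin (\<theta>0 + arctan (w / u))"
proof -
  have "u\<^sup>2 + w\<^sup>2 = ((sin \<theta>0)\<^sup>2 + (cos \<theta>0)\<^sup>2) * (y1\<^sup>2 + y2\<^sup>2)"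
    unfolding u_def w_def by algebra
  then have "u\<^sup>2 + w\<^sup>2 = \<delta>\<^sup>2" using norm by simp
  then have "sqrt (1 + (w / u)\<^sup>2) = \<delta> / u"
    using \<delta> u by (simp add: field_simps power2_eq_square real_sqrt_divide)
  then have cos: "cos (arctan (w / u)) = u / \<delta>" and sin: "sin (arctan (w / u)) = w / \<delta>"
    using \<delta> u by (simp_all add: cos_arctan sin_arctan field_simps)
  have "\<delta> * cos (\<theta>0 + arctan (w / u)) = cos \<theta>0 * u - sin \<theta>0 * w"
    using \<delta> by (simp add: cos_add cos sin field_simps)
  also have "\<dots> = ((sin \<theta>0)\<^sup>2 + (cos \<theta>0)\<^sup>2) * y1" unfolding u_def w_def by algebra
  finally have "y1 = \<delta> * cos (\<theta>0 + arctan (w / u))" by simp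
  moreover have "\<delta> * sin (\<theta>0 + arctan (w / u)) = sin \<theta>0 * u + cos \<theta>0 * w"
    using \<delta> by (simp add: sin_add cos sin field_simps)
  moreover have "\<dots> = ((sin \<theta>0)\<^sup>2 + (cos \<theta>0)\<^sup>2) * y2" unfolding u_def w_def by algebra
  ultimately show ?thesis by simp
qed

locale smooth_plane_map =
  fixes f1 f2 :: "real \<times> real \<Rightarrow> real"
  assumes smooth_f1: "smooth2 f1" and smooth_f2: "smooth2 f2"
begin

definition normsq :: "real \<times> real \<Rightarrow> real" where
  "normsq x = (f1 x)\<^sup>2 + (f2 x)\<^sup>2"

definition tangent :: "real \<times> real \<Rightarrow> real \<times> real" where
  "tangent x = (- pd2 normsq x, pd1 normsq x)"

definition second_variation :: "real \<times> real \<Rightarrow> real" where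
  "second_variation x = f1 x * jac f1 (jac f1 f2) x + f2 x * jac f2 (jac f1 f2) x"

lemma smooth2_on_f1: "smooth2_on U f1"
  using smooth_f1 smooth2_on_UNIV smooth2_on_subset by blast

lemma smooth2_on_f2: "smooth2_on U f2"
  using smooth_f2 smooth2_on_UNIV smooth2_on_subset by blast

lemma smooth2_on_normsq: "smooth2_on UNIV normsq"
  unfolding normsq_def power2_eq_square
  by (intro smooth2_on_add smooth2_on_mult smooth2_on_f1 smooth2_on_f2) simp_all

lemma smooth2_on_jac: "smooth2_on UNIV (jac f1 f2)"
  unfolding jac_def
  by (intro smooth2_on_diff smooth2_on_mult smooth2_on_pd1 smooth2_on_pd2 smooth2_on_f1 smooth2_on_f2)
    simp_all

lemma differentiable_f1: "f1 differentiable (at x)"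
  using smooth2_on_imp_differentiable[OF smooth2_on_f1] by blast

lemma differentiable_f2: "f2 differentiable (at x)"
  using smooth2_on_imp_differentiable[OF smooth2_on_f2] by blast

lemma pd_normsq:
  "pd1 normsq x = 2 * (f1 x * pd1 f1 x + f2 x * pd1 f2 x)"
  "pd2 normsq x = 2 * (f1 x * pd2 f1 x + f2 x * pd2 f2 x)"
proof -
  have "(normsq has_derivative (\<lambda>v. 2 * f1 x * dir f1 x v + 2 * f2 x * dir f2 x v)) (at x)"
    unfolding normsq_def
    using has_derivative_dir[OF differentiable_f1, of x] has_derivative_dir[OF differentiable_f2, of x]
    by (auto intro!: derivative_eq_intros)
  from pd_eq_derivative[OF this] show
    "pd1 normsq x = 2 * (f1 x * pd1 f1 x + f2 x * pd1 f2 x)"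
    "pd2 normsq x = 2 * (f1 x * pd2 f1 x + f2 x * pd2 f2 x)"
    by (simp_all add: dir_def algebra_simps)
qed

lemma dir_f1_tangent: "dir f1 x (tangent x) = - 2 * f2 x * jac f1 f2 x"
  unfolding dir_def tangent_def pd_normsq jac_def by (simp add: algebra_simps)

lemma dir_f2_tangent: "dir f2 x (tangent x) = 2 * f1 x * jac f1 f2 x"
  unfolding dir_def tangent_def pd_normsq jac_def by (simp add: algebra_simps)

lemma dir_jac_tangent: "dir (jac f1 f2) x (tangent x) = 2 * second_variation x"
  unfolding dir_def tangent_def pd_normsq second_variation_def jac_def
  by (simp only: ring_distribs) (simp add: algebra_simps)

lemma angle_deriv_along_tangent:
  fixes \<gamma> :: "real \<Rightarrow> real \<times> real" and c \<theta> :: "real \<Rightarrow> real"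
  assumes \<delta>: "\<delta> \<noteq> 0" and I: "open I" "t \<in> I"
    and \<gamma>: "(\<gamma> has_vector_derivative c t *\<^sub>R tangent (\<gamma> t)) (at t)"
    and \<theta>: "\<theta> field_differentiable (at t)"
    and polar: "\<And>s. s \<in> I \<Longrightarrow> f1 (\<gamma> s) = \<delta> * cos (\<theta> s) \<and> f2 (\<gamma> s) = \<delta> * sin (\<theta> s)"
  shows "deriv \<theta> t = 2 * c t * jac f1 f2 (\<gamma> t)"
proof -
  obtain \<theta>' where \<theta>': "(\<theta> has_real_derivative \<theta>') (at t)"
    using \<theta> field_differentiable_def by blast
  define r where "r = 2 * c t * jac f1 f2 (\<gamma> t)"
  have f1: "f1 (\<gamma> t) = \<delta> * cos (\<theta> t)" and f2: "f2 (\<gamma> t) = \<delta> * sin (\<theta> t)"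
    using polar[OF I(2)] by auto
  have "((\<lambda>s. f1 (\<gamma> s)) has_real_derivative c t * (- 2 * f2 (\<gamma> t) * jac f1 f2 (\<gamma> t))) (at t)"
    using has_real_derivative_comp_curve[OF differentiable_f1 \<gamma>] by (simp add: dir_scaleR dir_f1_tangent)
  moreover have "((\<lambda>s. f1 (\<gamma> s)) has_real_derivative \<delta> * (- sin (\<theta> t) * \<theta>')) (at t)"
    by (rule has_field_derivative_transform_within_open[OF _ I, of "\<lambda>s. \<delta> * cos (\<theta> s)"])
      (use polar in \<open>auto intro!: derivative_eq_intros \<theta>'\<close>)
  ultimately have "c t * (- 2 * f2 (\<gamma> t) * jac f1 f2 (\<gamma> t)) = \<delta> * (- sin (\<theta> t) * \<theta>')"
    by (rule DERIV_unique)
  then have "\<delta> * (sin (\<theta> t) * \<theta>') = \<delta> * (sin (\<theta> t) * r)"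
    unfolding f2 r_def by algebra
  then have sin_eq: "sin (\<theta> t) * \<theta>' = sin (\<theta> t) * r" using \<delta> by simp
  have "((\<lambda>s. f2 (\<gamma> s)) has_real_derivative c t * (2 * f1 (\<gamma> t) * jac f1 f2 (\<gamma> t))) (at t)"
    using has_real_derivative_comp_curve[OF differentiable_f2 \<gamma>] by (simp add: dir_scaleR dir_f2_tangent)
  moreover have "((\<lambda>s. f2 (\<gamma> s)) has_real_derivative \<delta> * (cos (\<theta> t) * \<theta>')) (at t)"
    by (rule has_field_derivative_transform_within_open[OF _ I, of "\<lambda>s. \<delta> * sin (\<theta> s)"])
      (use polar in \<open>auto intro!: derivative_eq_intros \<theta>'\<close>)
  ultimately have "c t * (2 * f1 (\<gamma> t) * jac f1 f2 (\<gamma> t)) = \<delta> * (cos (\<theta> t) * \<theta>')"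
    by (rule DERIV_unique)
  then have "\<delta> * (cos (\<theta> t) * \<theta>') = \<delta> * (cos (\<theta> t) * r)"
    unfolding f1 r_def by algebra
  then have "cos (\<theta> t) * \<theta>' = cos (\<theta> t) * r" using \<delta> by simp
  with sin_eq have "\<theta>' = r" by (rule sin_cos_mult_cancel)
  then show ?thesis using DERIV_imp_deriv[OF \<theta>'] by (simp add: r_def)
qed

lemma angle_second_deriv_along_tangent:
  fixes \<gamma> :: "real \<Rightarrow> real \<times> real" and c \<theta> :: "real \<Rightarrow> real"
  assumes \<delta>: "\<delta> \<noteq> 0" and I: "open I" "0 \<in> I"
    and \<gamma>: "\<And>t. t \<in> I \<Longrightarrow> (\<gamma> has_vector_derivative c t *\<^sub>R tangent (\<gamma> t)) (at t)"
    and \<theta>: "\<And>t. t \<in> I \<Longrightarrow> \<theta> field_differentiable (at t)"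
    and polar: "\<And>t. t \<in> I \<Longrightarrow> f1 (\<gamma> t) = \<delta> * cos (\<theta> t) \<and> f2 (\<gamma> t) = \<delta> * sin (\<theta> t)"
    and c: "(c has_real_derivative c') (at 0)"
  shows "(deriv \<theta> has_real_derivative
      2 * c' * jac f1 f2 (\<gamma> 0) + 4 * (c 0)\<^sup>2 * second_variation (\<gamma> 0)) (at 0)"
proof -
  have deriv_\<theta>: "deriv \<theta> t = 2 * c t * jac f1 f2 (\<gamma> t)" if "t \<in> I" for t
    using angle_deriv_along_tangent[of \<delta> I t \<gamma> c \<theta>, OF \<delta> I(1) that \<gamma>[OF that] \<theta>[OF that] polar] .
  have "((\<lambda>s. jac f1 f2 (\<gamma> s)) has_real_derivative c 0 * (2 * second_variation (\<gamma> 0))) (at 0)"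
    using has_real_derivative_comp_curve[OF smooth2_on_imp_differentiable[OF smooth2_on_jac] \<gamma>[OF I(2)]]
    by (simp add: dir_scaleR dir_jac_tangent)
  then have "((\<lambda>s. 2 * c s * jac f1 f2 (\<gamma> s)) has_real_derivative
      2 * c' * jac f1 f2 (\<gamma> 0) + 4 * (c 0)\<^sup>2 * second_variation (\<gamma> 0)) (at 0)"
    by (auto intro!: derivative_eq_intros c simp: power2_eq_square algebra_simps)
  then show ?thesis
    by (rule has_field_derivative_transform_within_open[OF _ I]) (simp add: deriv_\<theta>)
qed

lemma crit_restr_iff_jac_eq_0:
  assumes "normsq p \<noteq> 0" and reg: "(pd1 normsq p, pd2 normsq p) \<noteq> (0, 0)"
  shows "crit_restr f1 f2 normsq (normsq p) p \<longleftrightarrow> jac f1 f2 p = 0"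
proof
  assume "crit_restr f1 f2 normsq (normsq p) p"
  moreover have "dir normsq p (tangent p) = 0" by (simp add: dir_def tangent_def)
  ultimately have "dir f1 p (tangent p) = 0" "dir f2 p (tangent p) = 0"
    unfolding crit_restr_def by blast+
  then have "f2 p * jac f1 f2 p = 0" "f1 p * jac f1 f2 p = 0"
    by (simp_all add: dir_f1_tangent dir_f2_tangent)
  moreover have "f1 p \<noteq> 0 \<or> f2 p \<noteq> 0" using assms(1) by (auto simp: normsq_def)
  ultimately show "jac f1 f2 p = 0" by auto
next
  assume J: "jac f1 f2 p = 0"
  show "crit_restr f1 f2 normsq (normsq p) p"
    unfolding crit_restr_def
  proof (rule conjI[OF refl], intro allI impI)
    fix v assume "dir normsq p v = 0"
    then show "dir f1 p v = 0 \<and> dir f2 p v = 0"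
      using collinear_orthogonal_combination[where a = "pd1 f1 p" and b = "pd2 f1 p"
          and c = "pd1 f2 p" and d = "pd2 f2 p" and s = "2 * f1 p" and t = "2 * f2 p"
          and v = "fst v" and w = "snd v"] J reg
      by (simp add: dir_def pd_normsq jac_def algebra_simps)
  qed
qed

lemma angle_second_deriv_integral_curve:
  fixes x :: "real \<Rightarrow> real \<times> real" and \<theta> :: "real \<Rightarrow> real"
  assumes \<delta>: "\<delta> \<noteq> 0" and I: "open I" "0 \<in> I"
    and x: "\<And>t. t \<in> I \<Longrightarrow> (x has_vector_derivative tangent (x t)) (at t)"
    and \<theta>: "smooth1_on I \<theta>"
    and polar: "\<And>t. t \<in> I \<Longrightarrow> f1 (x t) = \<delta> * cos (\<theta> t) \<and> f2 (x t) = \<delta> * sin (\<theta> t)"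
  shows "deriv (deriv \<theta>) 0 = 4 * second_variation (x 0)"
proof -
  have "(deriv \<theta> has_real_derivative 2 * 0 * jac f1 f2 (x 0) + 4 * 1\<^sup>2 * second_variation (x 0)) (at 0)"
    using angle_second_deriv_along_tangent[OF \<delta> I, of x "\<lambda>_. 1" \<theta> 0] x polar
      smooth1_on_imp_field_differentiable[OF \<theta>]
    by simp
  then show ?thesis by (simp add: DERIV_imp_deriv)
qed

lemma angle_second_deriv_level_curve:
  fixes \<gamma> :: "real \<Rightarrow> real \<times> real" and \<theta> :: "real \<Rightarrow> real"
  assumes \<delta>: "\<delta> \<noteq> 0" and I: "open I" "0 \<in> I"
    and level: "\<And>t. t \<in> I \<Longrightarrow> normsq (\<gamma> t) = c"
    and reg: "\<And>t. t \<in> I \<Longrightarrow> (pd1 normsq (\<gamma> t), pd2 normsq (\<gamma> t)) \<noteq> (0, 0)"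
    and s1: "smooth1_on I (fst \<circ> \<gamma>)" and s2: "smooth1_on I (snd \<circ> \<gamma>)"
    and \<gamma>': "(\<gamma> has_vector_derivative \<gamma>') (at 0)" "\<gamma>' \<noteq> 0"
    and \<theta>: "smooth1_on I \<theta>"
    and polar: "\<And>t. t \<in> I \<Longrightarrow> f1 (\<gamma> t) = \<delta> * cos (\<theta> t) \<and> f2 (\<gamma> t) = \<delta> * sin (\<theta> t)"
    and crit: "jac f1 f2 (\<gamma> 0) = 0"
  shows "\<exists>k > 0. deriv (deriv \<theta>) 0 = k * second_variation (\<gamma> 0)"
proof -
  obtain \<mu> where \<mu>: "\<And>t. t \<in> I \<Longrightarrow> (\<gamma> has_vector_derivative \<mu> t *\<^sub>R tangent (\<gamma> t)) (at t)"
    "\<And>t. t \<in> I \<Longrightarrow> \<mu> field_differentiable (at t)"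
    using level_curve_velocity[OF I(1) smooth2_on_normsq level reg s1 s2] unfolding tangent_def by blast
  obtain \<mu>' where "(\<mu> has_real_derivative \<mu>') (at 0)"
    using \<mu>(2)[OF I(2)] field_differentiable_def by blast
  from angle_second_deriv_along_tangent[OF \<delta> I \<mu>(1) smooth1_on_imp_field_differentiable[OF \<theta>] polar this]
  have "deriv (deriv \<theta>) 0 = 4 * (\<mu> 0)\<^sup>2 * second_variation (\<gamma> 0)"
    using crit by (simp add: DERIV_imp_deriv)
  moreover have "\<mu> 0 \<noteq> 0"
    using vector_derivative_unique_at[OF \<gamma>'(1) \<mu>(1)[OF I(2)]] \<gamma>'(2) by auto
  ultimately show ?thesis by (intro exI[of _ "4 * (\<mu> 0)\<^sup>2"]) simp
qed

lemma exists_level_curve_with_angle: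
  assumes \<delta>: "\<delta> > 0" and p: "normsq p = \<delta>\<^sup>2" and reg: "(pd1 normsq p, pd2 normsq p) \<noteq> (0, 0)"
  shows "\<exists>\<epsilon> (\<gamma> :: real \<Rightarrow> real \<times> real) \<theta> \<gamma>'. \<epsilon> > 0 \<and> \<gamma> 0 = p \<and>
    (\<forall>t\<in>{-\<epsilon><..<\<epsilon>}. normsq (\<gamma> t) = \<delta>\<^sup>2) \<and>
    smooth1_on {-\<epsilon><..<\<epsilon>} (fst \<circ> \<gamma>) \<and> smooth1_on {-\<epsilon><..<\<epsilon>} (snd \<circ> \<gamma>) \<and>
    (\<gamma> has_vector_derivative \<gamma>') (at 0) \<and> \<gamma>' \<noteq> 0 \<and>
    smooth1_on {-\<epsilon><..<\<epsilon>} \<theta> \<and>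
    (\<forall>t\<in>{-\<epsilon><..<\<epsilon>}. f1 (\<gamma> t) = \<delta> * cos (\<theta> t) \<and> f2 (\<gamma> t) = \<delta> * sin (\<theta> t))"
proof -
  have "(f1 p / \<delta>)\<^sup>2 + (f2 p / \<delta>)\<^sup>2 = 1"
    using p \<delta> by (simp add: normsq_def power_divide add_divide_distrib[symmetric])
  then obtain \<theta>0 where "f1 p / \<delta> = cos \<theta>0" "f2 p / \<delta> = sin \<theta>0"
    using sincos_total_2pi by metis
  then have f_p: "f1 p = \<delta> * cos \<theta>0" "f2 p = \<delta> * sin \<theta>0" using \<delta> by (auto simp: field_simps)
  define u where "u x = cos \<theta>0 * f1 x + sin \<theta>0 * f2 x" for x
  define w where "w x = - sin \<theta>0 * f1 x + cos \<theta>0 * f2 x" for x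
  define A where "A x = \<theta>0 + arctan (w x / u x)" for x
  define U where "U = {x. 0 < u x}"
  have smooth_u: "smooth2_on UNIV u" and smooth_w: "smooth2_on UNIV w"
    unfolding u_def w_def
    by (intro smooth2_on_add smooth2_on_mult smooth2_on_const smooth2_on_f1 smooth2_on_f2; simp)+
  have "u p = \<delta>"
    unfolding u_def f_p using sin_cos_squared_add3[of \<theta>0] by algebra
  then have U: "open U" "p \<in> U"
    using \<delta> smooth2_on_imp_continuous_on[OF smooth_u]
    by (auto simp: U_def intro!: open_Collect_less continuous_on_const)
  obtain \<epsilon> :: real and V \<gamma> W1 W2 where \<epsilon>: "\<epsilon> > 0" and V: "open V" "V \<subseteq> U" and "\<gamma> 0 = p"
    and W: "smooth2_on V W1" "smooth2_on V W2" "(W1 p, W2 p) \<noteq> (0, 0)"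
    and \<gamma>: "\<And>t. t \<in> {-\<epsilon><..<\<epsilon>} \<Longrightarrow>
      \<gamma> t \<in> V \<and> normsq (\<gamma> t) = normsq p \<and> (\<gamma> has_vector_derivative (W1 (\<gamma> t), W2 (\<gamma> t))) (at t)"
    by (fact regular_level_integral_curve[OF smooth2_on_normsq U reg])
  have smooth_along: "smooth1_on {-\<epsilon><..<\<epsilon>} (H \<circ> \<gamma>)" if "smooth2_on V H" for H
    by (rule smooth1_on_comp_integral_curve[OF V(1) _ _ W(1,2) that]) (use \<gamma> in auto)
  have "smooth2_on V A"
    unfolding A_def using V smooth2_on_subset[OF smooth_u] smooth2_on_subset[OF smooth_w]
    by (intro smooth2_on_add smooth2_on_const smooth2_on_arctan smooth2_on_divide) (auto simp: U_def)
  moreover have "f1 (\<gamma> t) = \<delta> * cos (A (\<gamma> t)) \<and> f2 (\<gamma> t) = \<delta> * sin (A (\<gamma> t))"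
    if "t \<in> {-\<epsilon><..<\<epsilon>}" for t
    using polar_angle_arctan[OF \<delta>, of "f1 (\<gamma> t)" "f2 (\<gamma> t)" \<theta>0] \<gamma>[OF that] p V(2)
    by (auto simp: A_def u_def w_def U_def normsq_def)
  moreover have "(\<gamma> has_vector_derivative (W1 p, W2 p)) (at 0)"
    using \<gamma>[of 0] \<epsilon> \<open>\<gamma> 0 = p\<close> by simp
  ultimately show ?thesis
    using \<epsilon> \<open>\<gamma> 0 = p\<close> \<gamma> p W(3) smooth_along[OF smooth2_on_fst] smooth_along[OF smooth2_on_snd]
      smooth_along[of A]
    by (intro exI[of _ \<epsilon>] exI[of _ \<gamma>] exI[of _ "A \<circ> \<gamma>"] exI[of _ "(W1 p, W2 p)"])
      (auto simp: zero_prod_def)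
qed

lemma nondeg_crit_restr_iff:
  assumes \<delta>: "\<delta> > 0" and p: "normsq p = \<delta>\<^sup>2"
    and reg: "\<And>x. normsq x = \<delta>\<^sup>2 \<Longrightarrow> (pd1 normsq x, pd2 normsq x) \<noteq> (0, 0)"
  shows "nondeg_crit_restr f1 f2 normsq \<delta> p \<longleftrightarrow> jac f1 f2 p = 0 \<and> second_variation p \<noteq> 0"
proof -
  have crit_iff: "crit_restr f1 f2 normsq (\<delta>\<^sup>2) p \<longleftrightarrow> jac f1 f2 p = 0"
    using crit_restr_iff_jac_eq_0[OF _ reg[OF p]] p \<delta> by simp
  have second_deriv: "\<exists>k > 0. deriv (deriv \<theta>) 0 = k * second_variation p"
    if "\<epsilon> > 0" "\<gamma> 0 = p" "\<forall>t\<in>{-\<epsilon><..<\<epsilon>}. normsq (\<gamma> t) = \<delta>\<^sup>2"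
      "smooth1_on {-\<epsilon><..<\<epsilon>} (fst \<circ> \<gamma>)" "smooth1_on {-\<epsilon><..<\<epsilon>} (snd \<circ> \<gamma>)"
      "(\<gamma> has_vector_derivative \<gamma>') (at 0)" "\<gamma>' \<noteq> 0" "smooth1_on {-\<epsilon><..<\<epsilon>} \<theta>"
      "\<forall>t\<in>{-\<epsilon><..<\<epsilon>}. f1 (\<gamma> t) = \<delta> * cos (\<theta> t) \<and> f2 (\<gamma> t) = \<delta> * sin (\<theta> t)"
      "jac f1 f2 p = 0"
    for \<epsilon> \<gamma> \<gamma>' \<theta>
    using angle_second_deriv_level_curve[of \<delta> "{-\<epsilon><..<\<epsilon>}" \<gamma> "\<delta>\<^sup>2" \<gamma>' \<theta>] that \<delta> reg by simp
  show ?thesis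
  proof
    assume "nondeg_crit_restr f1 f2 normsq \<delta> p"
    then show "jac f1 f2 p = 0 \<and> second_variation p \<noteq> 0"
      unfolding nondeg_crit_restr_def crit_iff using second_deriv by fastforce
  next
    assume "jac f1 f2 p = 0 \<and> second_variation p \<noteq> 0"
    with exists_level_curve_with_angle[OF \<delta> p reg[OF p]] second_deriv
    show "nondeg_crit_restr f1 f2 normsq \<delta> p"
      unfolding nondeg_crit_restr_def crit_iff by (metis mult_eq_0_iff less_numeral_extra(3))
  qed
qed

end

theorem lemma5p2:
  fixes f1 f2 :: "real \<times> real \<Rightarrow> real" and \<delta> :: real
  defines "g \<equiv> (\<lambda>x. (f1 x)\<^sup>2 + (f2 x)\<^sup>2)"
  defines "P \<equiv> {x. g x = \<delta>\<^sup>2}"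
  defines "J \<equiv> jac f1 f2"
  defines "F1 \<equiv> jac f1 J"
  defines "F2 \<equiv> jac f2 J"
  defines "T \<equiv> (\<lambda>x. (- pd2 g x, pd1 g x))"
  assumes "smooth2 f1" and "smooth2 f2"
  assumes "\<delta> > 0"
  assumes "\<forall>x\<in>P. (pd1 g x, pd2 g x) \<noteq> (0, 0)"
  assumes "P \<noteq> {}"
  shows "(\<forall>p (x :: real \<Rightarrow> real \<times> real) \<theta> \<epsilon>.
            p \<in> P \<and> \<epsilon> > 0 \<and> x 0 = p \<and>
            (\<forall>t\<in>{-\<epsilon><..<\<epsilon>}. x t \<in> P \<and> (x has_vector_derivative T (x t)) (at t)) \<and>
            smooth1_on {-\<epsilon><..<\<epsilon>} \<theta> \<and>
            (\<forall>t\<in>{-\<epsilon><..<\<epsilon>}. f1 (x t) = \<delta> * cos (\<theta> t) \<and> f2 (x t) = \<delta> * sin (\<theta> t)) \<and>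
            crit_restr f1 f2 g (\<delta>\<^sup>2) p
          \<longrightarrow> sgn (deriv (deriv \<theta>) 0) = sgn (f1 p * F1 p + f2 p * F2 p))
       \<and> (\<forall>p\<in>P. nondeg_crit_restr f1 f2 g \<delta> p \<longleftrightarrow> J p = 0 \<and> f1 p * F1 p + f2 p * F2 p \<noteq> 0)"
proof -
  interpret smooth_plane_map f1 f2 by unfold_locales fact+
  have g: "g = normsq" by (simp add: g_def normsq_def fun_eq_iff)
  have T: "T = tangent" by (simp add: T_def tangent_def g fun_eq_iff)
  have Q: "f1 p * F1 p + f2 p * F2 p = second_variation p" for p by (simp add: F1_def F2_def J_def second_variation_def)
  have reg: "\<And>x. normsq x = \<delta>\<^sup>2 \<Longrightarrow> (pd1 normsq x, pd2 normsq x) \<noteq> (0, 0)"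
    using \<open>\<forall>x\<in>P. (pd1 g x, pd2 g x) \<noteq> (0, 0)\<close> unfolding P_def g by blast
  have "sgn (deriv (deriv \<theta>) 0) = sgn (second_variation p)"
    if "\<epsilon> > 0" "x 0 = p" "\<forall>t\<in>{-\<epsilon><..<\<epsilon>}. (x has_vector_derivative tangent (x t)) (at t)"
      "smooth1_on {-\<epsilon><..<\<epsilon>} \<theta>"
      "\<forall>t\<in>{-\<epsilon><..<\<epsilon>}. f1 (x t) = \<delta> * cos (\<theta> t) \<and> f2 (x t) = \<delta> * sin (\<theta> t)"
    for p x \<theta> and \<epsilon> :: real
    using angle_second_deriv_integral_curve[of \<delta> "{-\<epsilon><..<\<epsilon>}" x \<theta>] that \<open>\<delta> > 0\<close>
    by (simp add: sgn_mult)
  moreover have "nondeg_crit_restr f1 f2 normsq \<delta> p \<longleftrightarrow> jac f1 f2 p = 0 \<and> second_variation p \<noteq> 0"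
    if "p \<in> P" for p
    using nondeg_crit_restr_iff[OF \<open>\<delta> > 0\<close> _ reg] that by (simp add: P_def g)
  ultimately show ?thesis by (auto simp: g T Q J_def)
qed

end
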